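(* Let $n,r\ge 1$ be integers with $n\ge 8r$, and let $k$ be an integer with $\frac n2+3r\le k\le\frac{3n}{4}$. Let $S\subset\binom{[n]}{k}$, and let $A\subset\binom{[n]}{k-r}\setminus\partial^{r}S$ be a distance-$(2r+1)$ code. Then \[\big|\partial^{3r}S\cup\partial^{2r}A\big|\ \ge\ |S|+\frac{n^r|A|}{4(2r)^{3r}}.\]
   Context: $[n]=\{1,\dots,n\}$ and $\binom{[n]}{m}$ denotes the family of $m$-element subsets of $[n]$. For a family $F\subset 2^{[n]}$ and an integer $t\ge1$, the $t$-fold shadow $\partial^{t}F$ is the family of all sets obtainable by deleting $t$ elements from some set in $F$ (i.e. $\{y: y\subset x \text{ for some } x\in F,\ |x\setminus y|=t\}$). A family $A\subset 2^{[n]}$ is a distance-$d$ code if $|x\,\triangle\, y|\ge d$ for all distinct $x,y\in A$, where $\triangle$ denotes symmetric difference. *)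

theory Defs
  imports Complex_Main
begin

definition shadow :: "nat \<Rightarrow> 'a set set \<Rightarrow> 'a set set" where
  "shadow t F = {y. \<exists>x\<in>F. y \<subseteq> x \<and> card (x - y) = t}"

definition distance_code :: "nat \<Rightarrow> 'a set set \<Rightarrow> bool" where
  "distance_code d A \<longleftrightarrow> (\<forall>x\<in>A. \<forall>y\<in>A. x \<noteq> y \<longrightarrow> card ((x - y) \<union> (y - x)) \<ge> d)"

end

theory Submission
  imports Defs
begin

text \<open>
  Put \<open>T = \<partial>\<^sup>rS\<close> and \<open>F = T \<union> A\<close>, a family on level \<open>m = k - r\<close>, so that
  \<open>\<partial>\<^sup>2\<^sup>rF \<subseteq> \<partial>\<^sup>3\<^sup>rS \<union> \<partial>\<^sup>2\<^sup>rA\<close>. Double counting the containments between a family and its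
  shadow shows that the shadow exceeds the family by the containments landing outside the
  family, suitably normalised. Every codeword \<open>a\<close> has \<open>C(m, r) C(n - m, r)\<close> sets \<open>x\<close> on level
  \<open>m\<close> with \<open>|a - x| = r\<close>, none of them in \<open>A\<close>. If \<open>x \<in> T\<close>, the sets \<open>a \<union> x\<close> are distinct
  supersets of \<open>x\<close> outside \<open>S\<close> (as \<open>a \<notin> \<partial>\<^sup>rS\<close>), so they enlarge \<open>\<partial>\<^sup>rS\<close>; otherwise \<open>x \<notin> F\<close>
  and the sets of \<open>\<partial>\<^sup>2\<^sup>rF\<close> inside \<open>a \<inter> x\<close> enlarge \<open>\<partial>\<^sup>2\<^sup>rF\<close>. The distance of the code bounds
  the multiplicities, and elementary binomial estimates turn the two gains into the stated
  constant.
\<close>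

definition layer :: "'a set \<Rightarrow> nat \<Rightarrow> 'a set set" where
  "layer X p = {x. x \<subseteq> X \<and> card x = p}"

lemma mem_layer_iff [simp]: "x \<in> layer X p \<longleftrightarrow> x \<subseteq> X \<and> card x = p"
  by (simp add: layer_def)

lemma finite_layer [simp]: "finite X \<Longrightarrow> finite (layer X p)"
  unfolding layer_def by (rule finite_subset[of _ "Pow X"]) auto

lemma sum_card_filter_swap:
  assumes "finite A" "finite B"
  shows "(\<Sum>a\<in>A. card {b\<in>B. R a b}) = (\<Sum>b\<in>B. card {a\<in>A. R a b})"
proof -
  have card_filter: "card {x\<in>C. P x} = (\<Sum>x\<in>C. if P x then 1 else 0)" if "finite C" for C P
    using that by (simp add: sum.inter_filter[symmetric])
  show ?thesis using assms by (simp add: card_filter) (rule sum.swap)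
qed

lemma card_Diff_commute:
  "finite a \<Longrightarrow> finite b \<Longrightarrow> card a = card b \<Longrightarrow> card (a - b) = card (b - a)"
  by (metis Int_commute card_Diff_subset_Int finite_Int)

lemma choose_mult_choose_le_power: "((s + t) choose s) * (b choose (s + t)) \<le> b ^ (s + t)"
proof (cases "s + t \<le> b")
  case True
  have "(b choose (s + t)) * ((s + t) choose s) = (b choose s) * ((b - s) choose t)"
    using choose_mult[of s "s + t" b] True by simp
  also have "\<dots> \<le> b ^ s * b ^ t"
  proof (rule mult_mono)
    show "b choose s \<le> b ^ s" by (rule binomial_le_pow) (use True in simp)
    have "(b - s) choose t \<le> (b - s) ^ t" by (rule binomial_le_pow) (use True in simp)
    also have "\<dots> \<le> b ^ t" by (simp add: power_mono)
    finally show "(b - s) choose t \<le> b ^ t" .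
  qed auto
  finally show ?thesis by (simp add: power_add mult.commute)
qed (simp add: binomial_eq_0)

section \<open>Shadows\<close>

lemma shadow_subset_layer:
  assumes "finite X" "F \<subseteq> layer X p"
  shows "shadow t F \<subseteq> layer X (p - t)"
proof
  fix y assume "y \<in> shadow t F"
  then obtain x where x: "x \<in> F" "y \<subseteq> x" "card (x - y) = t" unfolding shadow_def by auto
  have "x \<in> layer X p" using x assms by blast
  hence "x \<subseteq> X" "card x = p" "finite x" using assms finite_subset by auto
  with x(2,3) show "y \<in> layer X (p - t)"
    by (auto simp: card_Diff_subset finite_subset card_mono diff_diff_cancel)
qed

lemma shadow_Un: "shadow t (F \<union> G) = shadow t F \<union> shadow t G"
  unfolding shadow_def by blast

lemma shadow_shadow_subset:
  assumes "\<And>s. s \<in> S \<Longrightarrow> finite s"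
  shows "shadow t (shadow u S) \<subseteq> shadow (u + t) S"
proof
  fix y assume "y \<in> shadow t (shadow u S)"
  then obtain x s where xy: "y \<subseteq> x" "card (x - y) = t"
    and sx: "s \<in> S" "x \<subseteq> s" "card (s - x) = u"
    unfolding shadow_def by blast
  have "finite s" using sx assms by blast
  have "s - y = (s - x) \<union> (x - y)" using xy sx by blast
  also have "card \<dots> = u + t"
    using \<open>finite s\<close> xy sx by (subst card_Un_disjoint) (auto intro: finite_subset)
  finally show "y \<in> shadow (u + t) S" using xy sx unfolding shadow_def by blast
qed

lemma card_supersets_in_layer:
  assumes "finite X" "y \<subseteq> X" "card y \<le> p"
  shows "card {x \<in> layer X p. y \<subseteq> x} = (card X - card y) choose (p - card y)"
proof -
  have fy: "finite y" using assms finite_subset by blast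
  have "bij_betw (\<lambda>x. x - y) {x \<in> layer X p. y \<subseteq> x} {P. P \<subseteq> X - y \<and> card P = p - card y}"
  proof (rule bij_betw_byWitness[where f'="\<lambda>P. P \<union> y"])
    show "\<forall>a\<in>{x \<in> layer X p. y \<subseteq> x}. a - y \<union> y = a" by auto
    show "\<forall>a'\<in>{P. P \<subseteq> X - y \<and> card P = p - card y}. a' \<union> y - y = a'" by auto
    show "(\<lambda>x. x - y) ` {x \<in> layer X p. y \<subseteq> x} \<subseteq> {P. P \<subseteq> X - y \<and> card P = p - card y}"
      using fy by (auto simp: card_Diff_subset)
    show "(\<lambda>P. P \<union> y) ` {P. P \<subseteq> X - y \<and> card P = p - card y} \<subseteq> {x \<in> layer X p. y \<subseteq> x}"
    proof -
      have "P \<union> y \<in> {x \<in> layer X p. y \<subseteq> x}" if P: "P \<subseteq> X - y" "card P = p - card y" for P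
      proof -
        have "finite P" using P assms finite_subset by blast
        with P fy have "card (P \<union> y) = card P + card y" by (subst card_Un_disjoint) auto
        with P assms show ?thesis by auto
      qed
      thus ?thesis by auto
    qed
  qed
  hence "card {x \<in> layer X p. y \<subseteq> x} = card {P. P \<subseteq> X - y \<and> card P = p - card y}"
    by (rule bij_betw_same_card)
  also have "\<dots> = card (X - y) choose (p - card y)" using assms by (simp add: n_subsets)
  finally show ?thesis using assms fy by (simp add: card_Diff_subset)
qed

text \<open>Every \<open>y \<in> \<partial>\<^sup>tF\<close> lies in \<open>C(|X| - p + t, t)\<close> sets of level \<open>p\<close>, and every \<open>x \<in> F\<close>
  contains \<open>C(p, t)\<close> of them.\<close>

lemma shadow_double_count:
  assumes X: "finite X" and F: "F \<subseteq> layer X p" and "t \<le> p"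
  shows "card (shadow t F) * ((card X - (p - t)) choose t)
         = card F * (p choose t) + (\<Sum>x\<in>layer X p - F. card {y\<in>shadow t F. y \<subseteq> x})"
proof -
  let ?G = "shadow t F" and ?L = "layer X p"
  have GL: "?G \<subseteq> layer X (p - t)" by (rule shadow_subset_layer[OF X F])
  have fG: "finite ?G" using finite_subset[OF GL] X by simp
  have "card ?G * ((card X - (p - t)) choose t) = (\<Sum>y\<in>?G. card {x\<in>?L. y \<subseteq> x})"
  proof -
    have "card {x\<in>?L. y \<subseteq> x} = (card X - (p - t)) choose t" if "y \<in> ?G" for y
      using that GL card_supersets_in_layer[OF X] \<open>t \<le> p\<close> by auto
    thus ?thesis by simp
  qed
  also have "\<dots> = (\<Sum>x\<in>?L. card {y\<in>?G. y \<subseteq> x})" by (rule sum_card_filter_swap) (use fG X in auto)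
  also have "\<dots> = (\<Sum>x\<in>F. card {y\<in>?G. y \<subseteq> x}) + (\<Sum>x\<in>?L - F. card {y\<in>?G. y \<subseteq> x})"
    using sum.subset_diff[OF F] X by (simp add: add.commute)
  also have "(\<Sum>x\<in>F. card {y\<in>?G. y \<subseteq> x}) = (\<Sum>x\<in>F. p choose t)"
  proof (rule sum.cong[OF refl])
    fix x assume xF: "x \<in> F"
    hence "x \<in> layer X p" using F by blast
    hence x: "x \<subseteq> X" "card x = p" "finite x" using X finite_subset by auto
    have "{y\<in>?G. y \<subseteq> x} = {y. y \<subseteq> x \<and> card y = p - t}"
    proof (intro equalityI subsetI)
      fix y assume "y \<in> {y\<in>?G. y \<subseteq> x}"
      thus "y \<in> {y. y \<subseteq> x \<and> card y = p - t}" using GL by auto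
    next
      fix y assume y: "y \<in> {y. y \<subseteq> x \<and> card y = p - t}"
      hence "finite y" using x(3) finite_subset by auto
      hence "card (x - y) = t" using x y \<open>t \<le> p\<close> by (simp add: card_Diff_subset)
      thus "y \<in> {y\<in>?G. y \<subseteq> x}" using xF y unfolding shadow_def by auto
    qed
    thus "card {y\<in>?G. y \<subseteq> x} = p choose t"
      using x \<open>t \<le> p\<close> by (simp add: n_subsets binomial_symmetric[symmetric])
  qed
  finally show ?thesis by simp
qed

lemma card_shadow_ge:
  assumes X: "finite X" and F: "F \<subseteq> layer X p" and "t \<le> p" "p \<le> card X" "card X + t \<le> 2 * p"
  shows "real (card F)
           + real (\<Sum>x\<in>layer X p - F. card {y\<in>shadow t F. y \<subseteq> x}) / real ((card X - (p - t)) choose t)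
         \<le> real (card (shadow t F))"
proof -
  define D where "D = (card X - (p - t)) choose t"
  define E where "E = (\<Sum>x\<in>layer X p - F. card {y\<in>shadow t F. y \<subseteq> x})"
  have "D > 0" using assms by (simp add: D_def)
  have "D \<le> p choose t" unfolding D_def by (rule binomial_right_mono) (use assms in simp)
  hence "card F * D + E \<le> card (shadow t F) * D"
    using shadow_double_count[OF X F \<open>t \<le> p\<close>] by (simp add: D_def E_def)
  hence "real (card F) * D + E \<le> real (card (shadow t F)) * D"
    by (metis of_nat_add of_nat_le_iff of_nat_mult)
  thus ?thesis using \<open>D > 0\<close> by (simp add: D_def E_def field_simps)
qed

section \<open>Codes\<close>

lemma distance_code_eq_if_near:
  assumes "distance_code (2 * r + 1) A" "a \<in> A" "a' \<in> A"
    and "(a - a') \<union> (a' - a) \<subseteq> b \<union> b'" "finite b" "finite b'" "card b \<le> r" "card b' \<le> r"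
  shows "a = a'"
proof (rule ccontr)
  assume "a \<noteq> a'"
  have "card ((a - a') \<union> (a' - a)) \<le> card (b \<union> b')" using assms by (intro card_mono) auto
  also have "\<dots> \<le> card b + card b'" by (rule card_Un_le)
  finally show False using assms \<open>a \<noteq> a'\<close> unfolding distance_code_def by force
qed

lemma card_layer_Diff_eq_ge:
  assumes X: "finite X" and a: "a \<subseteq> X" "card a = m" and "r \<le> m"
  shows "(m choose r) * ((card X - m) choose r) \<le> card {x \<in> layer X m. card (a - x) = r}"
proof -
  have fa: "finite a" using a X finite_subset by blast
  let ?P = "{R. R \<subseteq> a \<and> card R = r} \<times> {P. P \<subseteq> X - a \<and> card P = r}"
  let ?f = "\<lambda>(R, P). (a - R) \<union> P"
  have "inj_on ?f ?P"
  proof (rule inj_onI, clarify)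
    fix R P R' P' assume "R \<subseteq> a" "P \<subseteq> X - a" "R' \<subseteq> a" "P' \<subseteq> X - a"
      and eq: "(a - R) \<union> P = (a - R') \<union> P'"
    then have "R = a - ((a - R) \<union> P)" "R' = a - ((a - R') \<union> P')"
      and "P = ((a - R) \<union> P) - a" "P' = ((a - R') \<union> P') - a" by blast+
    with eq show "R = R' \<and> P = P'" by metis
  qed
  moreover have "?f ` ?P \<subseteq> {x \<in> layer X m. card (a - x) = r}"
  proof -
    have "(a - R) \<union> P \<in> {x \<in> layer X m. card (a - x) = r}"
      if R: "R \<subseteq> a" "card R = r" and P: "P \<subseteq> X - a" "card P = r" for R P
    proof -
      have "finite R" "finite P" using R(1) P(1) fa X by (auto intro: finite_subset)
      then have "card ((a - R) \<union> P) = m - r + r"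
        using R P fa a by (subst card_Un_disjoint) (auto simp: card_Diff_subset)
      moreover have "a - ((a - R) \<union> P) = R" using R P by blast
      ultimately show ?thesis using R P a \<open>r \<le> m\<close> by auto
    qed
    then show ?thesis by (auto simp del: mem_layer_iff)
  qed
  ultimately have "card ?P \<le> card {x \<in> layer X m. card (a - x) = r}"
    by (intro card_inj_on_le) (simp_all add: X)
  moreover have "card ?P = (m choose r) * ((card X - m) choose r)"
    using fa X a by (simp add: card_cartesian_product n_subsets card_Diff_subset)
  ultimately show ?thesis by simp
qed

lemma card_code_neighbours_le:
  assumes X: "finite X" and A: "A \<subseteq> layer X m - shadow r S"
    and code: "distance_code (2 * r + 1) A" and x: "x \<in> layer X m"
  shows "card {a\<in>A. card (a - x) = r} \<le> card {s \<in> layer X (m + r) - S. x \<subseteq> s}"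
proof -
  have fx: "finite x" "x \<subseteq> X" "card x = m" using x X finite_subset by auto
  have a_props: "finite a" "a \<subseteq> X" "card a = m" "a \<notin> shadow r S" if "a \<in> A" for a
    using subsetD[OF A that] X finite_subset by auto
  have xa: "card (x - a) = r" if "a \<in> A" "card (a - x) = r" for a
    using that a_props fx card_Diff_commute by metis
  have "inj_on (\<lambda>a. a \<union> x) {a\<in>A. card (a - x) = r}"
  proof (rule inj_onI)
    fix a a' assume a: "a \<in> {a\<in>A. card (a - x) = r}" and a': "a' \<in> {a\<in>A. card (a - x) = r}"
      and "a \<union> x = a' \<union> x"
    then have "(a - a') \<union> (a' - a) \<subseteq> (x - a) \<union> (x - a')" by blast
    with a a' show "a = a'" using distance_code_eq_if_near[OF code] fx xa by auto
  qed
  moreover have "a \<union> x \<in> layer X (m + r) - S \<and> x \<subseteq> a \<union> x"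
    if a: "a \<in> A" "card (a - x) = r" for a
  proof -
    have "card (a \<union> x) = card a + card (x - a)"
      using a_props[OF a(1)] fx by (metis Un_Diff_cancel card_Un_disjoint Diff_disjoint finite_Diff)
    moreover have "a \<union> x \<notin> S"
    proof
      assume "a \<union> x \<in> S"
      moreover have "card ((a \<union> x) - a) = r" using xa[OF a] by (simp add: Un_Diff)
      ultimately have "a \<in> shadow r S" unfolding shadow_def by blast
      with a_props[OF a(1)] show False by blast
    qed
    ultimately show ?thesis using a_props[OF a(1)] xa[OF a] fx by auto
  qed
  ultimately show ?thesis
    by (intro card_inj_on_le) (auto simp: X)
qed

text \<open>Double count pairs \<open>(a, y)\<close> with \<open>|a - x| = r\<close> and \<open>y \<in> \<partial>\<^sup>2\<^sup>rF\<close>, \<open>y \<subseteq> a \<inter> x\<close>: each such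
  \<open>a\<close> has all \<open>(m - 2r)\<close>-subsets of \<open>a \<inter> x\<close> as partners, while for fixed \<open>y\<close> the map
  \<open>a \<mapsto> x - a\<close> is injective into the \<open>r\<close>-subsets of \<open>x - y\<close>.\<close>

lemma card_code_neighbours_mult_le:
  assumes X: "finite X" and F: "F \<subseteq> layer X m" and "A \<subseteq> F"
    and code: "distance_code (2 * r + 1) A" and x: "x \<in> layer X m" and "2 * r \<le> m"
  shows "((m - r) choose r) * card {a\<in>A. card (a - x) = r}
         \<le> ((2 * r) choose r) * card {y \<in> shadow (2 * r) F. y \<subseteq> x}"
proof -
  let ?Ax = "{a\<in>A. card (a - x) = r}" and ?Yx = "{y \<in> shadow (2 * r) F. y \<subseteq> x}"
  have fx: "finite x" "x \<subseteq> X" "card x = m" using x X finite_subset by auto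
  have a_props: "a \<in> F" "finite a" "a \<subseteq> X" "card a = m" if "a \<in> A" for a
    using that \<open>A \<subseteq> F\<close> subsetD[OF F subsetD[OF \<open>A \<subseteq> F\<close> that]] X finite_subset by auto
  have GL: "shadow (2 * r) F \<subseteq> layer X (m - 2 * r)" by (rule shadow_subset_layer[OF X F])
  have fAx: "finite ?Ax" using finite_subset[OF \<open>A \<subseteq> F\<close> finite_subset[OF F]] X by simp
  have fYx: "finite ?Yx" using finite_subset[OF GL] X by simp
  have "(\<Sum>a\<in>?Ax. (m - r) choose r) \<le> (\<Sum>a\<in>?Ax. card {y\<in>?Yx. y \<subseteq> a})"
  proof (rule sum_mono)
    fix a assume a: "a \<in> ?Ax"
    note fa = a_props[of a]
    have "card (a \<inter> x) = m - r"
      using a fa card_Diff_subset_Int[of a x] card_mono[of a "a \<inter> x"] by (simp add: Int_commute)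
    moreover have "card {y. y \<subseteq> a \<inter> x \<and> card y = m - 2 * r} = card (a \<inter> x) choose (m - 2 * r)"
      by (rule n_subsets) (use fa a in simp)
    ultimately have "card {y. y \<subseteq> a \<inter> x \<and> card y = m - 2 * r} = (m - r) choose (m - 2 * r)"
      by simp
    also have "\<dots> = (m - r) choose r"
      using binomial_symmetric[of "m - 2 * r" "m - r"] \<open>2 * r \<le> m\<close> by simp
    finally have card_sub: "card {y. y \<subseteq> a \<inter> x \<and> card y = m - 2 * r} = (m - r) choose r" .
    have "y \<in> {y\<in>?Yx. y \<subseteq> a}" if y: "y \<subseteq> a \<inter> x" "card y = m - 2 * r" for y
    proof -
      have "finite y" using y fa a finite_subset by blast
      hence "card (a - y) = 2 * r" using y fa a \<open>2 * r \<le> m\<close> by (simp add: card_Diff_subset)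
      thus ?thesis using a fa y unfolding shadow_def by blast
    qed
    then have "{y. y \<subseteq> a \<inter> x \<and> card y = m - 2 * r} \<subseteq> {y\<in>?Yx. y \<subseteq> a}" by blast
    then show "(m - r) choose r \<le> card {y\<in>?Yx. y \<subseteq> a}"
      unfolding card_sub[symmetric] by (rule card_mono[rotated]) (rule finite_subset[OF _ fYx], blast)
  qed
  also have "\<dots> = (\<Sum>y\<in>?Yx. card {a\<in>?Ax. y \<subseteq> a})" by (rule sum_card_filter_swap[OF fAx fYx])
  also have "\<dots> \<le> (\<Sum>y\<in>?Yx. (2 * r) choose r)"
  proof (rule sum_mono)
    fix y assume y: "y \<in> ?Yx"
    hence "y \<subseteq> x" "card y = m - 2 * r" using GL by auto
    hence "card (x - y) = 2 * r" using fx \<open>2 * r \<le> m\<close> by (simp add: card_Diff_subset finite_subset)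
    have xa: "card (x - a) = r" if "a \<in> ?Ax" for a
      using that a_props[of a] fx card_Diff_commute[of a x] by simp
    have "inj_on (\<lambda>a. x - a) {a\<in>?Ax. y \<subseteq> a}"
    proof (rule inj_onI)
      fix a a' assume a: "a \<in> {a\<in>?Ax. y \<subseteq> a}" and a': "a' \<in> {a\<in>?Ax. y \<subseteq> a}"
        and "x - a = x - a'"
      then have "(a - a') \<union> (a' - a) \<subseteq> (a - x) \<union> (a' - x)" by blast
      with a a' show "a = a'" using distance_code_eq_if_near[OF code] a_props by auto
    qed
    moreover have "(\<lambda>a. x - a) ` {a\<in>?Ax. y \<subseteq> a} \<subseteq> {R. R \<subseteq> x - y \<and> card R = r}"
      using xa by auto
    ultimately have "card {a\<in>?Ax. y \<subseteq> a} \<le> card {R. R \<subseteq> x - y \<and> card R = r}"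
      by (intro card_inj_on_le) (use fx in auto)
    also have "\<dots> = (2 * r) choose r" using fx \<open>card (x - y) = 2 * r\<close> by (simp add: n_subsets)
    finally show "card {a\<in>?Ax. y \<subseteq> a} \<le> (2 * r) choose r" .
  qed
  finally show ?thesis by (simp add: mult.commute)
qed

lemma card_mult_le_sum_card_code_neighbours:
  assumes X: "finite X" and A: "A \<subseteq> layer X m" and code: "distance_code (2 * r + 1) A"
    and "1 \<le> r" "r \<le> m"
  shows "card A * ((m choose r) * ((card X - m) choose r))
         \<le> (\<Sum>x\<in>layer X m - A. card {a\<in>A. card (a - x) = r})"
proof -
  have fA: "finite A" using finite_subset[OF A] X by simp
  have no_neighbour_in_code: "{a\<in>A. card (a - x) = r} = {}" if "x \<in> A" for x
  proof -
    have "card (a - x) \<noteq> r" if "a \<in> A" for a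
    proof
      assume "card (a - x) = r"
      have "finite a" "finite x" "card a = card x"
        using subsetD[OF A \<open>a \<in> A\<close>] subsetD[OF A \<open>x \<in> A\<close>] X finite_subset by auto
      then have "card (x - a) = r" using card_Diff_commute \<open>card (a - x) = r\<close> by metis
      then have "a = x" using distance_code_eq_if_near[OF code \<open>a \<in> A\<close> \<open>x \<in> A\<close>, of "a - x" "x - a"]
          \<open>card (a - x) = r\<close> \<open>finite a\<close> \<open>finite x\<close> by auto
      with \<open>card (a - x) = r\<close> \<open>1 \<le> r\<close> show False by simp
    qed
    then show ?thesis by blast
  qed
  have "card A * ((m choose r) * ((card X - m) choose r))
        = (\<Sum>a\<in>A. (m choose r) * ((card X - m) choose r))" by simp
  also have "\<dots> \<le> (\<Sum>a\<in>A. card {x\<in>layer X m. card (a - x) = r})"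
  proof (rule sum_mono)
    fix a assume "a \<in> A"
    then have "a \<subseteq> X" "card a = m" using subsetD[OF A] by auto
    then show "(m choose r) * ((card X - m) choose r) \<le> card {x\<in>layer X m. card (a - x) = r}"
      by (rule card_layer_Diff_eq_ge[OF X _ _ \<open>r \<le> m\<close>])
  qed
  also have "\<dots> = (\<Sum>x\<in>layer X m. card {a\<in>A. card (a - x) = r})"
    by (rule sum_card_filter_swap) (use fA X in auto)
  also have "\<dots> = (\<Sum>x\<in>layer X m - A. card {a\<in>A. card (a - x) = r})"
    by (rule sum.mono_neutral_right) (auto simp: X no_neighbour_in_code)
  finally show ?thesis .
qed

section \<open>Growth of the shadows\<close>

lemma card_shadow_ge_code_neighbours:
  assumes X: "finite X" and S: "S \<subseteq> layer X (m + r)" and A: "A \<subseteq> layer X m - shadow r S"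
    and code: "distance_code (2 * r + 1) A" and "m + r \<le> card X" "card X \<le> 2 * m + r"
  shows "real (card S)
           + real (\<Sum>x\<in>shadow r S. card {a\<in>A. card (a - x) = r}) / real ((card X - m) choose r)
         \<le> real (card (shadow r S))"
proof -
  have TL: "shadow r S \<subseteq> layer X m" using shadow_subset_layer[OF X S, of r] by simp
  have "(\<Sum>x\<in>shadow r S. card {a\<in>A. card (a - x) = r})
        \<le> (\<Sum>x\<in>shadow r S. card {s\<in>layer X (m + r) - S. x \<subseteq> s})"
    by (rule sum_mono) (use card_code_neighbours_le[OF X A code] TL in blast)
  also have "\<dots> = (\<Sum>s\<in>layer X (m + r) - S. card {x\<in>shadow r S. x \<subseteq> s})"
    by (rule sum_card_filter_swap) (use finite_subset[OF TL] X in auto)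
  finally have "real (\<Sum>x\<in>shadow r S. card {a\<in>A. card (a - x) = r}) / real ((card X - m) choose r)
      \<le> real (\<Sum>s\<in>layer X (m + r) - S. card {x\<in>shadow r S. x \<subseteq> s}) / real ((card X - m) choose r)"
    by (intro divide_right_mono) (simp_all only: of_nat_le_iff of_nat_0_le_iff)
  with card_shadow_ge[OF X S, of r] assms show ?thesis by simp
qed

lemma card_shadow_ge_code_neighbours_outside:
  assumes X: "finite X" and F: "F \<subseteq> layer X m" and "A \<subseteq> F"
    and code: "distance_code (2 * r + 1) A" and "m \<le> card X" "card X + 2 * r \<le> 2 * m"
  shows "real (card F)
           + real ((m - r) choose r) * real (\<Sum>x\<in>layer X m - F. card {a\<in>A. card (a - x) = r})
             / (real ((2 * r) choose r) * real ((card X - m + 2 * r) choose (2 * r)))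
         \<le> real (card (shadow (2 * r) F))"
proof -
  define D where "D = real ((card X - m + 2 * r) choose (2 * r))"
  define Q where "Q = (\<Sum>x\<in>layer X m - F. card {a\<in>A. card (a - x) = r})"
  define E where "E = (\<Sum>x\<in>layer X m - F. card {y\<in>shadow (2 * r) F. y \<subseteq> x})"
  have "0 < D" "0 < real ((2 * r) choose r)" by (simp_all add: D_def)
  have "((m - r) choose r) * Q \<le> ((2 * r) choose r) * E"
    unfolding Q_def E_def sum_distrib_left
    by (rule sum_mono) (use card_code_neighbours_mult_le[OF X F \<open>A \<subseteq> F\<close> code] assms in auto)
  then have "real ((m - r) choose r) * real Q \<le> real ((2 * r) choose r) * real E"
    by (metis of_nat_le_iff of_nat_mult)
  then have "real ((m - r) choose r) * real Q / (real ((2 * r) choose r) * D) \<le> real E / D"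
    using \<open>0 < D\<close> \<open>0 < real ((2 * r) choose r)\<close> by (simp add: field_simps)
  moreover have "card X - (m - 2 * r) = card X - m + 2 * r" using assms by simp
  ultimately show ?thesis
    using card_shadow_ge[OF X F, of "2 * r"] assms unfolding D_def Q_def E_def by simp
qed

lemma mult_le_weighted_sum:
  fixes c K a P Q w1 w2 :: real
  assumes "0 < K" "0 \<le> c" "0 \<le> P" "0 \<le> Q" "c \<le> K * w1" "c \<le> K * w2" "K * a \<le> P + Q"
  shows "c * a \<le> w1 * P + w2 * Q"
proof -
  have "K * (c * a) \<le> c * (P + Q)"
    using assms by (metis mult.left_commute mult_left_mono)
  also have "\<dots> \<le> K * w1 * P + K * w2 * Q"
    using assms by (simp add: distrib_left add_mono mult_right_mono)
  finally have "K * (c * a) \<le> K * (w1 * P + w2 * Q)" by (simp add: algebra_simps)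
  with \<open>0 < K\<close> show ?thesis by (simp add: mult_le_cancel_left_pos)
qed

lemma card_shadow_shadow_Un_code_ge:
  fixes c :: real
  assumes X: "finite X" and S: "S \<subseteq> layer X k" and A: "A \<subseteq> layer X (k - r) - shadow r S"
    and code: "distance_code (2 * r + 1) A" and "1 \<le> r" "k \<le> card X" "card X + 6 * r \<le> 2 * k"
    and "0 \<le> c" and c1: "c \<le> real ((k - r) choose r)"
    and c2: "c * real ((2 * r) choose r) * real ((card X - k + 3 * r) choose (2 * r))
             \<le> real ((k - 2 * r) choose r) * real ((k - r) choose r) * real ((card X - k + r) choose r)"
  shows "real (card S) + c * real (card A) \<le> real (card (shadow (2 * r) (shadow r S \<union> A)))"
proof -
  define m where "m = k - r"
  define T where "T = shadow r S"
  define F where "F = T \<union> A"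
  define \<mu> where "\<mu> x = real (card {a\<in>A. card (a - x) = r})" for x
  define P where "P = (\<Sum>x\<in>T. \<mu> x)"
  define Q where "Q = (\<Sum>x\<in>layer X m - F. \<mu> x)"
  define K where "K = real (m choose r) * real ((card X - m) choose r)"
  define w1 where "w1 = 1 / real ((card X - m) choose r)"
  define w2 where "w2 = real ((m - r) choose r)
                         / (real ((2 * r) choose r) * real ((card X - m + 2 * r) choose (2 * r)))"
  have k: "k = m + r" and k_eqs: "k - r = m" "k - 2 * r = m - r" "card X - k + r = card X - m"
    "card X - k + 3 * r = card X - m + 2 * r"
    using assms unfolding m_def by auto
  note c1 = c1[unfolded k_eqs] and c2 = c2[unfolded k_eqs]
  have "r \<le> m" "r \<le> card X - m" using assms k by auto
  have TL: "T \<subseteq> layer X m" unfolding T_def using shadow_subset_layer[OF X S, of r] k by simp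
  have AL: "A \<subseteq> layer X m" and "A \<inter> T = {}" using A unfolding m_def T_def by auto
  have "finite T" "finite A" using finite_subset[OF TL] finite_subset[OF AL] X by auto
  have T_ge: "real (card S) + w1 * P \<le> real (card T)"
    using card_shadow_ge_code_neighbours[OF X _ _ code, where m = m] S A assms k
    unfolding w1_def P_def \<mu>_def T_def m_def by simp
  have "real (card T) \<le> real (card F)"
    unfolding F_def using \<open>finite T\<close> \<open>finite A\<close> by (simp add: card_mono)
  then have F_ge: "real (card T) + w2 * Q \<le> real (card (shadow (2 * r) F))"
    using card_shadow_ge_code_neighbours_outside[OF X _ _ code, where F = F and m = m] TL AL assms k
    unfolding w2_def Q_def \<mu>_def F_def by simp
  have "layer X m - A = T \<union> (layer X m - F)" "T \<inter> (layer X m - F) = {}"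
    using TL \<open>A \<inter> T = {}\<close> unfolding F_def by auto
  then have "card A * ((m choose r) * ((card X - m) choose r))
             \<le> (\<Sum>x\<in>T. card {a\<in>A. card (a - x) = r}) + (\<Sum>x\<in>layer X m - F. card {a\<in>A. card (a - x) = r})"
    using card_mult_le_sum_card_code_neighbours[OF X AL code \<open>1 \<le> r\<close>] X \<open>finite T\<close> assms k
    by (simp add: sum.union_disjoint)
  then have "real (card A * ((m choose r) * ((card X - m) choose r)))
             \<le> real ((\<Sum>x\<in>T. card {a\<in>A. card (a - x) = r}) + (\<Sum>x\<in>layer X m - F. card {a\<in>A. card (a - x) = r}))"
    by (simp only: of_nat_le_iff)
  then have "K * real (card A) \<le> P + Q"
    unfolding K_def P_def Q_def \<mu>_def by (simp add: algebra_simps)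
  moreover have "0 < K" "0 \<le> P" "0 \<le> Q" using \<open>r \<le> m\<close> \<open>r \<le> card X - m\<close>
    unfolding K_def P_def Q_def \<mu>_def by (auto intro: sum_nonneg)
  moreover have "c \<le> K * w1" "c \<le> K * w2"
    using c1 c2 \<open>r \<le> card X - m\<close> unfolding K_def w1_def w2_def by (auto simp: field_simps)
  ultimately have "c * real (card A) \<le> w1 * P + w2 * Q"
    using \<open>0 \<le> c\<close> by (intro mult_le_weighted_sum)
  with T_ge F_ge show ?thesis unfolding F_def T_def by linarith
qed

section \<open>Binomial estimates\<close>

definition gain :: "nat \<Rightarrow> nat \<Rightarrow> real" where
  "gain n r = real n ^ r / (4 * (2 * real r) ^ (3 * r))"

lemma gain_nonneg: "0 \<le> gain n r"
  by (simp add: gain_def)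

lemma gain_le_choose:
  assumes r: "1 \<le> r" and k: "n + 6 * r \<le> 2 * k"
  shows "gain n r \<le> real ((k - r) choose r)"
proof -
  have rk: "r \<le> k - r" using r k by linarith
  have "real n ^ r / (4 * (2 * real r) ^ (3 * r)) \<le> real n ^ r / (2 * real r) ^ r"
  proof (rule divide_left_mono)
    have "(2 * real r) ^ r \<le> (2 * real r) ^ (3 * r)" by (rule power_increasing) (use r in auto)
    moreover have "0 \<le> (2 * real r) ^ (3 * r)" by simp
    ultimately show "(2 * real r) ^ r \<le> 4 * (2 * real r) ^ (3 * r)" by linarith
  qed (use r in auto)
  also have "\<dots> = (real n / (2 * real r)) ^ r" by (simp add: power_divide)
  also have "\<dots> \<le> (real (k - r) / real r) ^ r"
  proof (rule power_mono)
    have "real n / 2 \<le> real (k - r)" using k rk by (simp add: of_nat_diff)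
    then show "real n / (2 * real r) \<le> real (k - r) / real r"
      using r by (simp add: field_simps)
  qed simp
  also have "\<dots> \<le> real ((k - r) choose r)" by (rule binomial_ge_n_over_k_pow_k[OF rk])
  finally show ?thesis unfolding gain_def .
qed

lemma gain_mult_choose_le:
  assumes r: "1 \<le> r" and k: "n + 6 * r \<le> 2 * k" "4 * k \<le> 3 * n"
  shows "gain n r * real ((2 * r) choose r) * real ((n - k + 3 * r) choose (2 * r))
         \<le> real ((k - 2 * r) choose r) * real ((k - r) choose r) * real ((n - k + r) choose r)"
proof -
  define b where "b = n - k + 3 * r"
  have "0 < real r" using r by simp
  have "real ((2 * r) choose r) * real (b choose (2 * r)) \<le> real b ^ (2 * r)"
    using choose_mult_choose_le_power[of r r b] by (simp add: mult_2 flip: of_nat_mult of_nat_power)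
  then have "gain n r * real ((2 * r) choose r) * real (b choose (2 * r)) \<le> gain n r * real b ^ (2 * r)"
    using gain_nonneg by (simp add: mult.assoc mult_left_mono)
  also have "\<dots> = (real n * real b ^ 2 / (8 * real r ^ 3)) ^ r / 4"
    by (simp add: gain_def power_mult power_divide power_mult_distrib)
  also have "\<dots> \<le> (real n * real b ^ 2 / (8 * real r ^ 3)) ^ r" by simp
  also have "\<dots> \<le> (real (k - 2 * r) / real r * (real (k - r) / real r) * (real (n - k + r) / real r)) ^ r"
  proof (rule power_mono)
    have "real b \<le> real (k - 2 * r)" "real (k - 2 * r) \<le> real (k - r)"
      "real n / 8 \<le> real (n - k + r)"
      using k unfolding b_def by (simp_all add: of_nat_diff)
    then have "real b ^ 2 * (real n / 8) \<le> real (k - 2 * r) * real (k - r) * real (n - k + r)"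
      unfolding power2_eq_square by (intro mult_mono) auto
    then show "real n * real b ^ 2 / (8 * real r ^ 3)
        \<le> real (k - 2 * r) / real r * (real (k - r) / real r) * (real (n - k + r) / real r)"
      using \<open>0 < real r\<close> by (simp add: field_simps power3_eq_cube)
  qed simp
  also have "\<dots> = (real (k - 2 * r) / real r) ^ r * (real (k - r) / real r) ^ r
                  * (real (n - k + r) / real r) ^ r"
    by (simp only: power_mult_distrib)
  also have "\<dots> \<le> real ((k - 2 * r) choose r) * real ((k - r) choose r) * real ((n - k + r) choose r)"
    by (intro mult_mono binomial_ge_n_over_k_pow_k) (use k in auto)
  finally show ?thesis unfolding b_def .
qed

theorem lemma3:
  fixes n r k :: nat and S A :: "nat set set"
  assumes "n \<ge> 1" "r \<ge> 1" "n \<ge> 8 * r"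
    and "real n / 2 + 3 * real r \<le> real k" "real k \<le> 3 * real n / 4"
    and "S \<subseteq> {x. x \<subseteq> {1..n} \<and> card x = k}"
    and "A \<subseteq> {x. x \<subseteq> {1..n} \<and> card x = k - r} - shadow r S"
    and "distance_code (2 * r + 1) A"
  shows "real (card (shadow (3 * r) S \<union> shadow (2 * r) A))
           \<ge> real (card S) + real n ^ r * real (card A) / (4 * (2 * real r) ^ (3 * r))"
proof -
  have k: "n + 6 * r \<le> 2 * k" "4 * k \<le> 3 * n" using assms(4,5) by linarith+
  have S: "S \<subseteq> layer {1..n} k" and A: "A \<subseteq> layer {1..n} (k - r) - shadow r S"
    using assms(6,7) by (auto simp: layer_def)
  then have AL: "A \<subseteq> layer {1..n} (k - r)" by blast
  have "real (card S) + gain n r * real (card A)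
        \<le> real (card (shadow (2 * r) (shadow r S \<union> A)))"
    by (rule card_shadow_shadow_Un_code_ge[OF _ S A assms(8) assms(2)])
      (use k gain_nonneg gain_le_choose[OF assms(2) k(1)] gain_mult_choose_le[OF assms(2) k] in simp_all)
  also have "\<dots> \<le> real (card (shadow (3 * r) S \<union> shadow (2 * r) A))"
  proof -
    have "finite s" if "s \<in> S" for s
      using subsetD[OF S that] by (auto intro: finite_subset)
    then have "shadow (2 * r) (shadow r S) \<subseteq> shadow (3 * r) S"
      using shadow_shadow_subset[of S "2 * r" r] by (simp add: add_mult_distrib)
    moreover have "finite (shadow (3 * r) S \<union> shadow (2 * r) A)"
      using shadow_subset_layer[OF _ S] shadow_subset_layer[OF _ AL]
      by (meson finite_Un finite_atLeastAtMost finite_layer finite_subset)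
    ultimately show ?thesis by (auto simp: shadow_Un intro!: card_mono)
  qed
  finally show ?thesis by (simp add: gain_def)
qed

end
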